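(* Let $X$ be a binary $N\times t$ matrix that is 3-good, let $S\subseteq[t]$ with $|S|=3$, $\mathbf{y}=r(X,S)$, $H=H(X,3,\mathbf{y})=([t],E)$, $L_1=\log_2\log_2 t$, $L_2=3L_1$. Let $G'=([t],E')$ be the graph in which distinct vertices $v_1,v_2$ are adjacent iff at least $L_2$ hyperedges of $E$ contain both; let $E_1\subseteq E$ be the set of hyperedges containing some edge of $G'$ as a subset, and $E_2=E\setminus E_1$. Then there exists a partition of $E_2$ into $M\le 96L_1^2L_2^2$ disjoint sets $E_2=\bigsqcup_{i=1}^M E_{2,i}$ such that: (1) no two distinct intersecting hyperedges lie in the same set, i.e. if $e_1\in E_{2,i}$, $e_2\in E_{2,j}$, $e_1\ne e_2$ and $e_1\cap e_2\neq\emptyset$, then $i\neq j$; (2) if $e_1\in E_{2,i}$, $e_2\in E_{2,j}$, $e_1\ne e_2$, and there is a hyperedge $e\in E$ (from $E_1$ or $E_2$) with $e\cap e_1\neq\emptyset$ and $e\cap e_2\neq\emptyset$, then $i\neq j$.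
   Context: For a binary $N\times t$ matrix $X$ with columns $x(1),\dots,x(t)$ and $S\subseteq[t]$, $r(X,S)=\bigvee_{j\in S}x(j)$ (coordinatewise Boolean OR). For $\mathbf{y}\in\{0,1\}^N$, $H(X,3,\mathbf{y})$ is the $3$-uniform hypergraph on $[t]$ whose hyperedges are all $3$-element $S\subseteq[t]$ with $r(X,S)=\mathbf{y}$. A $(3,k)$ configuration of size $L$ is a set of $L$ hyperedges $e_1,\dots,e_L$ with a set $U$, $|U|=k$, such that $e_i\cap e_j=U$ for all $i\ne j$. Fix $p\in(0,1)$; $\Pr_1(s,w)$ is the probability that the OR of $s$ independent uniformly random length-$N$ binary columns of weight $\lfloor pN\rfloor$ equals a fixed vector of weight $w$; $\Pr_2(s,w_1,w)$ is the probability that the OR of $s$ such columns together with a fixed column $\mathbf{y}_1$ of weight $w_1$ equals a fixed vector $\mathbf{y}$ of weight $w$ with $\mathbf{y}\vee\mathbf{y}_1=\mathbf{y}$. With $L_1=\log_2\log_2 t$, $X$ is 3-good if: (1) for every $\mathbf{y}$, $H(X,3,\mathbf{y})$ has no $(3,1)$ configuration of size $L_1$; (2) for every $\mathbf{y}$ with $|\mathbf{y}|=w$, $H(X,3,\mathbf{y})$ has no $(3,0)$ configuration of size $10\max(t^3\Pr_1(3,w),N)$; (3) for all $\mathbf{y},\mathbf{y}_1$ with $\mathbf{y}\vee\mathbf{y}_1=\mathbf{y}$, $|\mathbf{y}_1|=w_1$, $|\mathbf{y}|=w$, the number of $j$ with $\mathbf{y}_1\vee x(j)=\mathbf{y}$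 is less than $10B(N,t)$, where $B(N,t)=t\Pr_2(1,w_1,w)$ if this exceeds $N$, $B(N,t)=N$ if $t^{-1/\sqrt{L_1}}\le t\Pr_2(1,w_1,w)\le N$, and $B(N,t)=L_1/10$ if $t\Pr_2(1,w_1,w)<t^{-1/\sqrt{L_1}}$; (4) for every $\mathbf{y}$ with $|\mathbf{y}|=w$ and integer $w_1\le w$, the number of pairwise disjoint pairs $\{j_1,j_2\}\subseteq[t]$ with $x(j_1)\vee x(j_2)\vee\mathbf{y}=\mathbf{y}$ and $|x(j_1)\vee x(j_2)|=w_1$ is less than $10\max(N,\binom{w}{w_1}t^2\Pr_1(2,w_1))$. *)

theory Defs
  imports Complex_Main "HOL-Library.FuncSet"
begin

text \<open>A binary N x t matrix is a predicate X i j (row i < N, column j < t).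
  Binary vectors of length N are represented by their supports, i.e. subsets of {..<N};
  Boolean OR is union and the weight is the cardinality.\<close>

definition col :: "(nat \<Rightarrow> nat \<Rightarrow> bool) \<Rightarrow> nat \<Rightarrow> nat \<Rightarrow> nat set" where
  "col X N j = {i. i < N \<and> X i j}"

definition rvec :: "(nat \<Rightarrow> nat \<Rightarrow> bool) \<Rightarrow> nat \<Rightarrow> nat set \<Rightarrow> nat set" where
  "rvec X N S = (\<Union>j\<in>S. col X N j)"

definition hyp3 :: "(nat \<Rightarrow> nat \<Rightarrow> bool) \<Rightarrow> nat \<Rightarrow> nat \<Rightarrow> nat set \<Rightarrow> nat set set" where
  "hyp3 X N t y = {S. S \<subseteq> {..<t} \<and> card S = 3 \<and> rvec X N S = y}"

definition has_config :: "nat set set \<Rightarrow> nat \<Rightarrow> real \<Rightarrow> bool" where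
  "has_config E k L = (\<exists>F U. F \<subseteq> E \<and> finite F \<and> real (card F) \<ge> L \<and> card U = k \<and>
      (\<forall>e1\<in>F. \<forall>e2\<in>F. e1 \<noteq> e2 \<longrightarrow> e1 \<inter> e2 = U))"

definition wcols :: "nat \<Rightarrow> nat \<Rightarrow> nat set set" where
  "wcols N k = {A. A \<subseteq> {..<N} \<and> card A = k}"

text \<open>Pr_1(s,w): probability that the OR of s independent uniform weight-k columns
  equals a fixed vector of weight w (taken w.l.o.g. to be {..<w}).\<close>
definition Pr1 :: "nat \<Rightarrow> nat \<Rightarrow> nat \<Rightarrow> nat \<Rightarrow> real" where
  "Pr1 N k s w = real (card {f \<in> {..<s} \<rightarrow>\<^sub>E wcols N k. (\<Union>i<s. f i) = {..<w}})
                 / real (N choose k) ^ s"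

text \<open>Pr_2(s,w1,w): same, with a fixed column y1 of weight w1 included, y1 \<subseteq> y.\<close>
definition Pr2 :: "nat \<Rightarrow> nat \<Rightarrow> nat \<Rightarrow> nat \<Rightarrow> nat \<Rightarrow> real" where
  "Pr2 N k s w1 w = real (card {f \<in> {..<s} \<rightarrow>\<^sub>E wcols N k. {..<w1} \<union> (\<Union>i<s. f i) = {..<w}})
                 / real (N choose k) ^ s"

definition L1 :: "nat \<Rightarrow> real" where
  "L1 t = log 2 (log 2 (real t))"

definition Bfun :: "real \<Rightarrow> nat \<Rightarrow> nat \<Rightarrow> real \<Rightarrow> real" where
  "Bfun P N t Lone =
     (if real t * P > real N then real t * P
      else if real t powr (- 1 / sqrt Lone) \<le> real t * P then real N
      else Lone / 10)"

definition good3 :: "real \<Rightarrow> nat \<Rightarrow> nat \<Rightarrow> (nat \<Rightarrow> nat \<Rightarrow> bool) \<Rightarrow> bool" where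
  "good3 p N t X = (let k = nat \<lfloor>p * real N\<rfloor>; L = L1 t in
     (\<forall>y. y \<subseteq> {..<N} \<longrightarrow> \<not> has_config (hyp3 X N t y) 1 L) \<and>
     (\<forall>y. y \<subseteq> {..<N} \<longrightarrow>
        \<not> has_config (hyp3 X N t y) 0 (10 * max (real t ^ 3 * Pr1 N k 3 (card y)) (real N))) \<and>
     (\<forall>y y1. y \<subseteq> {..<N} \<longrightarrow> y1 \<subseteq> y \<longrightarrow>
        real (card {j. j < t \<and> y1 \<union> col X N j = y})
          < 10 * Bfun (Pr2 N k 1 (card y1) (card y)) N t L) \<and>
     (\<forall>y w1 P. y \<subseteq> {..<N} \<longrightarrow> w1 \<le> card y \<longrightarrow>
        P \<subseteq> {{j1, j2} | j1 j2. j1 < t \<and> j2 < t \<and> j1 \<noteq> j2 \<and>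
                 col X N j1 \<union> col X N j2 \<subseteq> y \<and> card (col X N j1 \<union> col X N j2) = w1} \<longrightarrow>
        (\<forall>a\<in>P. \<forall>b\<in>P. a \<noteq> b \<longrightarrow> a \<inter> b = {}) \<longrightarrow>
        real (card P) < 10 * max (real N) (real (card y choose w1) * real t ^ 2 * Pr1 N k 2 w1)))"

end

(* For every vertex z fix a maximal sunflower with kernel {z} in E. By 3-goodness it has fewer
   than L1 petals, so the set C z of its other vertices has at most 2 L1 elements, and by
   maximality every hyperedge through z meets C z outside z. An edge of E2 through b therefore
   contains some x in C b, and b, x lie on fewer than L2 common hyperedges: every vertex has
   E2-degree at most 2 L1 L2. If a and b lie on a common hyperedge, looking at its third vertex
   shows that one of a, b is reachable from the other in at most two C-steps. So if two edges f, g
   of E2 meet a common hyperedge, then g passes through the two-step C-neighbourhood of a vertex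
   of f or vice versa; this orients all conflicts with out-degree at most
   d = 3 (1 + 2 L1 + 4 L1^2) 2 L1 L2, and a graph so oriented is 2d-degenerate, hence
   (2d + 1)-colourable. The colour classes form the partition. *)

theory Submission
  imports Defs
begin

definition sunflower_at :: "'a \<Rightarrow> 'a set set \<Rightarrow> bool" where
  "sunflower_at z F \<longleftrightarrow> (\<forall>e\<in>F. z \<in> e) \<and> (\<forall>e1\<in>F. \<forall>e2\<in>F. e1 \<noteq> e2 \<longrightarrow> e1 \<inter> e2 = {z})"

definition link_transversal :: "'a set set \<Rightarrow> ('a \<Rightarrow> 'a set) \<Rightarrow> bool" where
  "link_transversal E C \<longleftrightarrow> (\<forall>h\<in>E. \<forall>z\<in>h. (h - {z}) \<inter> C z \<noteq> {})"

definition reach2 :: "('a \<Rightarrow> 'a set) \<Rightarrow> 'a \<Rightarrow> 'a set" where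
  "reach2 C z = insert z (C z \<union> (\<Union>x\<in>C z. C x))"

lemma exists_small_in_degree:
  fixes Out :: "'a \<Rightarrow> 'a set"
  assumes "finite A" "A \<noteq> {}" "\<And>g. g \<in> A \<Longrightarrow> card (Out g \<inter> A) \<le> d"
  obtains f where "f \<in> A" "card {g\<in>A. f \<in> Out g} \<le> d"
proof (rule ccontr)
  assume "\<not> thesis"
  with that have "\<And>f. f \<in> A \<Longrightarrow> d < card {g\<in>A. f \<in> Out g}" by force
  then have "card A * d < (\<Sum>f\<in>A. card {g\<in>A. f \<in> Out g})"
    using sum_strict_mono[of A "\<lambda>_. d"] assms(1,2) by (simp add: mult.commute)
  also have "\<dots> = (\<Sum>g\<in>A. card (Out g \<inter> A))"
    using assms(1) by (intro sum_multicount_gen) (auto intro: arg_cong[where f = card])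
  also have "\<dots> \<le> card A * d"
    using sum_bounded_above[of A "\<lambda>g. card (Out g \<inter> A)" d] assms(3) by simp
  finally show False by simp
qed

lemma colouring_from_bounded_out_sets:
  fixes Out :: "'a \<Rightarrow> 'a set" and conflict :: "'a \<Rightarrow> 'a \<Rightarrow> bool"
  assumes "finite A" "\<And>g. g \<in> A \<Longrightarrow> card (Out g \<inter> A) \<le> d"
    and "\<And>f g. f \<in> A \<Longrightarrow> g \<in> A \<Longrightarrow> f \<noteq> g \<Longrightarrow> conflict f g \<Longrightarrow> g \<in> Out f \<or> f \<in> Out g"
  obtains col :: "'a \<Rightarrow> nat" where "\<And>f. f \<in> A \<Longrightarrow> col f \<le> 2 * d"
    "\<And>f g. f \<in> A \<Longrightarrow> g \<in> A \<Longrightarrow> f \<noteq> g \<Longrightarrow> conflict f g \<Longrightarrow> col f \<noteq> col g"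
  using assms
proof (induction A arbitrary: thesis rule: finite_remove_induct)
  case empty
  then show ?case by blast
next
  case (remove A)
  obtain f0 where f0: "f0 \<in> A" "card {g\<in>A. f0 \<in> Out g} \<le> d"
    using exists_small_in_degree[of A Out d] remove.hyps remove.prems(2) by blast
  have out': "card (Out g \<inter> (A - {f0})) \<le> d" if "g \<in> A - {f0}" for g
  proof -
    have "card (Out g \<inter> (A - {f0})) \<le> card (Out g \<inter> A)"
      by (rule card_mono) (use remove.hyps(1) in auto)
    then show ?thesis using remove.prems(2)[of g] that by simp
  qed
  obtain col where col: "\<And>f. f \<in> A - {f0} \<Longrightarrow> col f \<le> 2 * d"
    "\<And>f g. f \<in> A - {f0} \<Longrightarrow> g \<in> A - {f0} \<Longrightarrow> f \<noteq> g \<Longrightarrow> conflict f g \<Longrightarrow> col f \<noteq> col g"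
    using remove.IH[OF f0(1) _ out'] remove.prems(3) by blast
  define Used where "Used = col ` (Out f0 \<inter> A \<union> {g\<in>A. f0 \<in> Out g})"
  have "finite Used" unfolding Used_def using remove.hyps(1) by simp
  have "card Used \<le> card (Out f0 \<inter> A \<union> {g\<in>A. f0 \<in> Out g})"
    unfolding Used_def using remove.hyps(1) by (intro card_image_le) simp
  also have "\<dots> \<le> card (Out f0 \<inter> A) + card {g\<in>A. f0 \<in> Out g}"
    by (rule card_Un_le)
  also have "\<dots> \<le> 2 * d" using remove.prems(2)[OF f0(1)] f0(2) by simp
  finally have "\<not> {..2 * d} \<subseteq> Used"
    using card_mono[OF \<open>finite Used\<close>, of "{..2 * d}"] by auto
  then obtain k where k: "k \<le> 2 * d" "k \<notin> Used" by auto
  show ?case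
  proof (rule remove.prems(1)[of "col(f0 := k)"])
    show "(col(f0 := k)) f \<le> 2 * d" if "f \<in> A" for f using that col(1) k(1) by auto
    show "(col(f0 := k)) f \<noteq> (col(f0 := k)) g"
      if "f \<in> A" "g \<in> A" "f \<noteq> g" "conflict f g" for f g
    proof -
      have "f = f0 \<Longrightarrow> col g \<in> Used" "g = f0 \<Longrightarrow> col f \<in> Used"
        using remove.prems(3)[OF that] that unfolding Used_def by auto
      then show ?thesis using that col(2)[of f g] k(2) by (cases "f = f0 \<or> g = f0") auto
    qed
  qed
qed

lemma maximal_sunflower_hits_link:
  assumes "finite E" "\<And>e. e \<in> E \<Longrightarrow> 2 \<le> card e"
  obtains F where "F \<subseteq> E" "sunflower_at z F"
    "\<And>h. h \<in> E \<Longrightarrow> z \<in> h \<Longrightarrow> (h - {z}) \<inter> (\<Union>F - {z}) \<noteq> {}"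
proof -
  define Fam where "Fam = {F. F \<subseteq> E \<and> sunflower_at z F}"
  have "finite Fam" unfolding Fam_def
    by (rule finite_subset[of _ "Pow E"]) (use assms(1) in auto)
  moreover have "{} \<in> Fam" unfolding Fam_def sunflower_at_def by simp
  ultimately obtain F where F: "F \<in> Fam" and max: "\<And>G. G \<in> Fam \<Longrightarrow> F \<subseteq> G \<Longrightarrow> F = G"
    using finite_has_maximal[of Fam] by blast
  have "(h - {z}) \<inter> (\<Union>F - {z}) \<noteq> {}" if h: "h \<in> E" "z \<in> h" for h
  proof (cases "h \<in> F")
    case True
    have "\<not> h \<subseteq> {z}" using assms(2)[OF h(1)] card_mono[of "{z}" h] by auto
    then show ?thesis using True by auto
  next
    case False
    show ?thesis
    proof
      assume "(h - {z}) \<inter> (\<Union>F - {z}) = {}"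
      then have "insert h F \<in> Fam" using F h unfolding Fam_def sunflower_at_def by blast
      then show False using max[of "insert h F"] False by blast
    qed
  qed
  then show thesis using that F unfolding Fam_def by blast
qed

lemma exists_small_link_transversal:
  assumes "finite E" "\<And>e. e \<in> E \<Longrightarrow> card e = 3"
    and "\<And>F z. F \<subseteq> E \<Longrightarrow> sunflower_at z F \<Longrightarrow> real (card F) < l"
  obtains C where "link_transversal E C" "\<And>z. finite (C z)" "\<And>z. real (card (C z)) \<le> 2 * l"
proof -
  have "2 \<le> card e" if "e \<in> E" for e using assms(2)[OF that] by simp
  then have "\<exists>F. F \<subseteq> E \<and> sunflower_at z F \<and>
      (\<forall>h\<in>E. z \<in> h \<longrightarrow> (h - {z}) \<inter> (\<Union>F - {z}) \<noteq> {})" for z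
    using maximal_sunflower_hits_link[of E z] assms(1) by metis
  then obtain P where P: "\<And>z. P z \<subseteq> E" "\<And>z. sunflower_at z (P z)"
    "\<And>z h. h \<in> E \<Longrightarrow> z \<in> h \<Longrightarrow> (h - {z}) \<inter> (\<Union>(P z) - {z}) \<noteq> {}"
    by metis
  define C where "C z = (\<Union>e\<in>P z. e - {z})" for z
  have finite_P: "finite (P z)" for z using P(1) assms(1) by (rule finite_subset)
  have finite_edge: "finite e" if "e \<in> E" for e using assms(2)[OF that] by (intro card_ge_0_finite) simp
  show thesis
  proof
    show "link_transversal E C" using P(3) unfolding link_transversal_def C_def by blast
    show "finite (C z)" for z unfolding C_def using finite_P P(1) finite_edge by blast
    show "real (card (C z)) \<le> 2 * l" for z
    proof -
      have "card (C z) \<le> (\<Sum>e\<in>P z. card (e - {z}))"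
        unfolding C_def using finite_P by (rule card_UN_le)
      also have "\<dots> = 2 * card (P z)"
        using P(1,2)[of z] assms(2) by (auto simp: sunflower_at_def card_Diff_singleton_if subset_eq)
      finally have "real (card (C z)) \<le> 2 * real (card (P z))"
        using of_nat_mono by fastforce
      then show ?thesis using assms(3)[OF P(1,2)[of z]] by linarith
    qed
  qed
qed

lemma card_edges_through_le:
  assumes "finite F" "finite (C b)" "0 \<le> K"
    and "\<And>f. f \<in> F \<Longrightarrow> b \<in> f \<Longrightarrow> (f - {b}) \<inter> C b \<noteq> {}"
    and "\<And>f x. f \<in> F \<Longrightarrow> b \<in> f \<Longrightarrow> x \<in> f \<Longrightarrow> x \<noteq> b \<Longrightarrow> real (card {g\<in>F. b \<in> g \<and> x \<in> g}) \<le> K"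
  shows "real (card {f\<in>F. b \<in> f}) \<le> real (card (C b)) * K"
proof -
  have codegree: "real (card {g\<in>F. b \<in> g \<and> x \<in> g}) \<le> K" if "x \<noteq> b" for x
  proof (cases "{g\<in>F. b \<in> g \<and> x \<in> g} = {}")
    case True
    then show ?thesis using assms(3) by (subst True) simp
  next
    case False
    then show ?thesis using assms(5) that by blast
  qed
  have "card {f\<in>F. b \<in> f} \<le> card (\<Union>x\<in>C b - {b}. {g\<in>F. b \<in> g \<and> x \<in> g})"
    using assms(4) by (intro card_mono) (use assms(1,2) in auto)
  also have "\<dots> \<le> (\<Sum>x\<in>C b - {b}. card {g\<in>F. b \<in> g \<and> x \<in> g})"
    using assms(2) by (intro card_UN_le) simp
  finally have "real (card {f\<in>F. b \<in> f}) \<le> (\<Sum>x\<in>C b - {b}. real (card {g\<in>F. b \<in> g \<and> x \<in> g}))"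
    by (simp only: of_nat_le_iff of_nat_sum[symmetric])
  also have "\<dots> \<le> real (card (C b - {b})) * K"
    by (rule sum_bounded_above) (use codegree in auto)
  also have "\<dots> \<le> real (card (C b)) * K"
    using assms(2,3) by (intro mult_right_mono) (simp_all add: card_Diff1_le)
  finally show ?thesis .
qed

lemma card_reach2_le:
  assumes "\<And>x. finite (C x)" "\<And>x. real (card (C x)) \<le> c"
  shows "real (card (reach2 C z)) \<le> 1 + c + c^2"
proof -
  have "card (reach2 C z) \<le> 1 + card (C z \<union> (\<Union>x\<in>C z. C x))"
    unfolding reach2_def by (intro card_insert_le_m1) simp_all
  also have "\<dots> \<le> 1 + card (C z) + card (\<Union>x\<in>C z. C x)"
    using card_Un_le by simp
  also have "\<dots> \<le> 1 + card (C z) + (\<Sum>x\<in>C z. card (C x))"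
    using card_UN_le[OF assms(1)] by simp
  finally have "real (card (reach2 C z)) \<le> 1 + real (card (C z)) + (\<Sum>x\<in>C z. real (card (C x)))"
    by (simp only: of_nat_le_iff of_nat_add of_nat_1 of_nat_sum[symmetric])
  moreover have "(\<Sum>x\<in>C z. real (card (C x))) \<le> real (card (C z)) * c"
    by (rule sum_bounded_above) (rule assms(2))
  moreover have "real (card (C z)) * c \<le> c * c"
    using assms(2)[of z] by (intro mult_right_mono) auto
  ultimately show ?thesis using assms(2)[of z] by (simp add: power2_eq_square)
qed

lemma reach2_of_same_edge:
  assumes "link_transversal E C" "e \<in> E" "card e = 3" "a \<in> e" "b \<in> e"
  shows "b \<in> reach2 C a \<or> a \<in> reach2 C b"
proof (cases "a = b")
  case True
  then show ?thesis unfolding reach2_def by simp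
next
  case False
  have "card (e - {a, b}) = 1" using assms(3-5) False by (simp add: card_Diff_subset)
  then obtain c where "e - {a, b} = {c}" by (auto simp: card_1_singleton_iff)
  then have e: "e = {a, b, c}" "c \<noteq> a" "c \<noteq> b" using assms(4,5) by auto
  have hit: "\<exists>x\<in>e - {v}. x \<in> C v" if "v \<in> e" for v
    using assms(1,2) that unfolding link_transversal_def by blast
  consider "b \<in> C a" | "a \<in> C b" | "c \<in> C a" "c \<in> C b"
    using hit[of a] hit[of b] assms(4,5) e by auto
  then show ?thesis
  proof cases
    case 3
    have "a \<in> C c \<or> b \<in> C c" using hit[of c] e by auto
    then show ?thesis using 3 unfolding reach2_def by blast
  qed (auto simp: reach2_def)
qed

definition near_edges :: "'a set set \<Rightarrow> ('a \<Rightarrow> 'a set) \<Rightarrow> 'a set \<Rightarrow> 'a set set" where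
  "near_edges F C f = {g\<in>F. \<exists>a\<in>f. reach2 C a \<inter> g \<noteq> {}}"

lemma card_near_edges_le:
  assumes "finite f" "\<And>x. finite (C x)" "\<And>x. real (card (C x)) \<le> c"
    and "\<And>b. real (card {g\<in>F. b \<in> g}) \<le> D"
  shows "real (card (near_edges F C f)) \<le> real (card f) * ((1 + c + c^2) * D)"
proof -
  have "0 \<le> D" by (rule order_trans[OF of_nat_0_le_iff assms(4)])
  have "near_edges F C f = (\<Union>a\<in>f. \<Union>b\<in>reach2 C a. {g\<in>F. b \<in> g})"
    unfolding near_edges_def by blast
  then have "card (near_edges F C f) \<le> (\<Sum>a\<in>f. card (\<Union>b\<in>reach2 C a. {g\<in>F. b \<in> g}))"
    using assms(1) by (simp add: card_UN_le)
  also have "\<dots> \<le> (\<Sum>a\<in>f. \<Sum>b\<in>reach2 C a. card {g\<in>F. b \<in> g})"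
    using assms(2) by (intro sum_mono card_UN_le) (simp add: reach2_def)
  finally have "real (card (near_edges F C f)) \<le> (\<Sum>a\<in>f. \<Sum>b\<in>reach2 C a. real (card {g\<in>F. b \<in> g}))"
    by (simp only: of_nat_le_iff of_nat_sum[symmetric])
  also have "\<dots> \<le> (\<Sum>a\<in>f. (1 + c + c^2) * D)"
  proof (rule sum_mono)
    fix a
    have "(\<Sum>b\<in>reach2 C a. real (card {g\<in>F. b \<in> g})) \<le> real (card (reach2 C a)) * D"
      by (rule sum_bounded_above) (rule assms(4))
    also have "\<dots> \<le> (1 + c + c^2) * D"
      using card_reach2_le[OF assms(2,3)] \<open>0 \<le> D\<close> by (rule mult_right_mono)
    finally show "(\<Sum>b\<in>reach2 C a. real (card {g\<in>F. b \<in> g})) \<le> (1 + c + c^2) * D" .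
  qed
  finally show ?thesis by simp
qed

lemma near_edges_if_touching:
  assumes "link_transversal E C" "e \<in> E" "card e = 3" "e \<inter> f \<noteq> {}" "e \<inter> g \<noteq> {}" "f \<in> F" "g \<in> F"
  shows "g \<in> near_edges F C f \<or> f \<in> near_edges F C g"
proof -
  obtain a b where "a \<in> e" "a \<in> f" "b \<in> e" "b \<in> g" using assms(4,5) by blast
  then have "b \<in> reach2 C a \<or> a \<in> reach2 C b"
    using assms(1-3) by (intro reach2_of_same_edge[of E]) auto
  then show ?thesis unfolding near_edges_def using \<open>a \<in> f\<close> \<open>b \<in> g\<close> assms(6,7) by auto
qed

lemma colouring_separating_touching_edges:
  assumes "finite E" "\<And>e. e \<in> E \<Longrightarrow> card e = 3" "F \<subseteq> E"
    and "link_transversal E C" "\<And>z. finite (C z)" "\<And>z. real (card (C z)) \<le> c"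
    and "\<And>b. real (card {f\<in>F. b \<in> f}) \<le> D"
  obtains col :: "'a set \<Rightarrow> nat" where
    "\<And>f. f \<in> F \<Longrightarrow> real (col f) \<le> 6 * (1 + c + c^2) * D"
    "\<And>f g e. f \<in> F \<Longrightarrow> g \<in> F \<Longrightarrow> e \<in> E \<Longrightarrow> f \<noteq> g \<Longrightarrow> e \<inter> f \<noteq> {} \<Longrightarrow> e \<inter> g \<noteq> {} \<Longrightarrow>
      col f \<noteq> col g"
proof -
  define B where "B = 3 * (1 + c + c^2) * D"
  have "0 \<le> B"
    using order_trans[OF of_nat_0_le_iff assms(6)] order_trans[OF of_nat_0_le_iff assms(7)]
    unfolding B_def by simp
  have card_near: "card (near_edges F C f \<inter> F) \<le> nat \<lfloor>B\<rfloor>" if "f \<in> F" for f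
  proof -
    have "card f = 3" using assms(2,3) that by auto
    then have "finite f" by (intro card_ge_0_finite) simp
    then have "real (card (near_edges F C f)) \<le> B"
      using card_near_edges_le[of f C c F D, OF _ assms(5-7)] \<open>card f = 3\<close> unfolding B_def by (simp add: algebra_simps)
    moreover have "near_edges F C f \<inter> F = near_edges F C f" unfolding near_edges_def by auto
    ultimately show ?thesis by (simp add: le_nat_floor)
  qed
  obtain col where col: "\<And>f. f \<in> F \<Longrightarrow> col f \<le> 2 * nat \<lfloor>B\<rfloor>"
    "\<And>f g. f \<in> F \<Longrightarrow> g \<in> F \<Longrightarrow> f \<noteq> g \<Longrightarrow> \<exists>e\<in>E. e \<inter> f \<noteq> {} \<and> e \<inter> g \<noteq> {} \<Longrightarrow> col f \<noteq> col g"
  proof (rule colouring_from_bounded_out_sets[of F "near_edges F C" "nat \<lfloor>B\<rfloor>"])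
    show "finite F" using assms(1,3) by (rule finite_subset[rotated])
    show "card (near_edges F C g \<inter> F) \<le> nat \<lfloor>B\<rfloor>" if "g \<in> F" for g
      using that by (rule card_near)
    show "g \<in> near_edges F C f \<or> f \<in> near_edges F C g"
      if "f \<in> F" "g \<in> F" "f \<noteq> g" "\<exists>e\<in>E. e \<inter> f \<noteq> {} \<and> e \<inter> g \<noteq> {}" for f g
      using that assms(2,4) near_edges_if_touching by metis
  qed (rule that)
  show thesis
  proof (rule that)
    show "real (col f) \<le> 6 * (1 + c + c^2) * D" if "f \<in> F" for f
    proof -
      have "real (col f) \<le> 2 * real (nat \<lfloor>B\<rfloor>)"
        using of_nat_mono[where 'a = real, OF col(1)[OF that]] by (simp only: of_nat_mult of_nat_numeral)
      then show ?thesis using of_nat_floor[OF \<open>0 \<le> B\<close>] unfolding B_def by linarith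
    qed
    show "col f \<noteq> col g"
      if "f \<in> F" "g \<in> F" "e \<in> E" "f \<noteq> g" "e \<inter> f \<noteq> {}" "e \<inter> g \<noteq> {}" for f g e
      using col(2) that by blast
  qed
qed

lemma partition_low_codegree_edges:
  assumes "finite E" "\<And>e. e \<in> E \<Longrightarrow> card e = 3"
    and "\<And>F z. F \<subseteq> E \<Longrightarrow> sunflower_at z F \<Longrightarrow> real (card F) < l"
    and "F \<subseteq> E" "0 \<le> K"
    and "\<And>f x y. f \<in> F \<Longrightarrow> x \<in> f \<Longrightarrow> y \<in> f \<Longrightarrow> x \<noteq> y \<Longrightarrow> real (card {e\<in>E. x \<in> e \<and> y \<in> e}) < K"
  obtains M :: nat and Es :: "nat \<Rightarrow> 'a set set" where
    "real M \<le> 1 + 12 * l * K * (1 + 2 * l + 4 * l^2)"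
    "(\<Union>i<M. Es i) = F" "\<And>i j. i < M \<Longrightarrow> j < M \<Longrightarrow> i \<noteq> j \<Longrightarrow> Es i \<inter> Es j = {}"
    "\<And>i j f g e. i < M \<Longrightarrow> j < M \<Longrightarrow> f \<in> Es i \<Longrightarrow> g \<in> Es j \<Longrightarrow> e \<in> E \<Longrightarrow>
       f \<noteq> g \<Longrightarrow> e \<inter> f \<noteq> {} \<Longrightarrow> e \<inter> g \<noteq> {} \<Longrightarrow> i \<noteq> j"
proof -
  obtain C where C: "link_transversal E C" "\<And>z. finite (C z)" "\<And>z. real (card (C z)) \<le> 2 * l"
    using exists_small_link_transversal[of E l] assms(1-3) by blast
  have "0 \<le> l" using order_trans[OF of_nat_0_le_iff C(3)] by simp
  have "real (card {f\<in>F. b \<in> f}) \<le> 2 * l * K" for b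
  proof -
    have "real (card {f\<in>F. b \<in> f}) \<le> real (card (C b)) * K"
    proof (rule card_edges_through_le)
      show "finite F" using assms(1,4) by (rule finite_subset[rotated])
      show "(f - {b}) \<inter> C b \<noteq> {}" if "f \<in> F" "b \<in> f" for f
        using C(1) assms(4) that unfolding link_transversal_def by blast
      show "real (card {g\<in>F. b \<in> g \<and> x \<in> g}) \<le> K" if "f \<in> F" "b \<in> f" "x \<in> f" "x \<noteq> b" for f x
      proof -
        have "real (card {g\<in>F. b \<in> g \<and> x \<in> g}) \<le> real (card {e\<in>E. b \<in> e \<and> x \<in> e})"
          using assms(1,4) by (intro of_nat_mono card_mono) auto
        also have "\<dots> < K" using assms(6)[OF that(1-3)] that(4) by auto
        finally show ?thesis by simp
      qed
    qed (use C(2) assms(5) in simp_all)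
    also have "\<dots> \<le> 2 * l * K" using C(3) assms(5) by (rule mult_right_mono)
    finally show ?thesis .
  qed
  then obtain col where col_le: "\<And>f. f \<in> F \<Longrightarrow> real (col f) \<le> 6 * (1 + 2 * l + (2 * l)^2) * (2 * l * K)"
    and col_ne: "\<And>f g e. f \<in> F \<Longrightarrow> g \<in> F \<Longrightarrow> e \<in> E \<Longrightarrow> f \<noteq> g \<Longrightarrow> e \<inter> f \<noteq> {} \<Longrightarrow> e \<inter> g \<noteq> {} \<Longrightarrow>
      col f \<noteq> col g"
    using colouring_separating_touching_edges[of E F C "2 * l" "2 * l * K"] assms(1,2,4) C by blast
  define B where "B = 6 * (1 + 2 * l + (2 * l)^2) * (2 * l * K)"
  define Es where "Es i = {f\<in>F. col f = i}" for i
  show thesis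
  proof (rule that[of "nat \<lfloor>B\<rfloor> + 1" Es])
    have "0 \<le> B" unfolding B_def using \<open>0 \<le> l\<close> assms(5) by simp
    then show "real (nat \<lfloor>B\<rfloor> + 1) \<le> 1 + 12 * l * K * (1 + 2 * l + 4 * l^2)"
      unfolding B_def by (simp add: algebra_simps power2_eq_square)
    have "col f < nat \<lfloor>B\<rfloor> + 1" if "f \<in> F" for f
      using le_nat_floor[OF col_le[OF that, folded B_def]] by simp
    then show "(\<Union>i<nat \<lfloor>B\<rfloor> + 1. Es i) = F" unfolding Es_def by auto
    show "Es i \<inter> Es j = {}" if "i \<noteq> j" for i j using that unfolding Es_def by auto
    show "i \<noteq> j" if "f \<in> Es i" "g \<in> Es j" "e \<in> E" "f \<noteq> g" "e \<inter> f \<noteq> {}" "e \<inter> g \<noteq> {}" for i j f g e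
      using that col_ne unfolding Es_def by blast
  qed
qed

lemma finite_hyp3: "finite (hyp3 X N t y)"
  unfolding hyp3_def by (rule finite_subset[of _ "Pow {..<t}"]) auto

lemma good3_no_config_1:
  assumes "good3 p N t X"
  shows "\<not> has_config (hyp3 X N t (rvec X N S)) 1 (L1 t)"
proof -
  have "\<forall>y. y \<subseteq> {..<N} \<longrightarrow> \<not> has_config (hyp3 X N t y) 1 (L1 t)"
    using assms unfolding good3_def Let_def by (rule conjunct1)
  moreover have "rvec X N S \<subseteq> {..<N}" unfolding rvec_def col_def by auto
  ultimately show ?thesis by blast
qed

lemma card_sunflower_less_if_no_config:
  assumes "finite E" "\<not> has_config E 1 L" "F \<subseteq> E" "sunflower_at z F"
  shows "real (card F) < L"
proof (rule ccontr)
  assume "\<not> real (card F) < L"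
  then have "has_config E 1 L"
    using assms(1,3,4) finite_subset unfolding has_config_def sunflower_at_def
    by (intro exI[of _ F] exI[of _ "{z}"]) auto
  with assms(2) show False ..
qed

(* A single hyperedge is a (3,1) configuration of size 1. *)
lemma one_less_if_no_config:
  assumes "\<not> has_config E 1 L" "e \<in> E"
  shows "1 < L"
proof (rule ccontr)
  assume "\<not> 1 < L"
  then have "has_config E 1 L"
    using assms(2) unfolding has_config_def by (intro exI[of _ "{e}"] exI[of _ "{0}"]) auto
  with assms(1) show False ..
qed

lemma partition_size_bound:
  fixes l M :: real
  assumes "M \<le> 1 + 12 * l * (3 * l) * (1 + 2 * l + 4 * l^2)" "1 < l"
  shows "M \<le> 96 * l^2 * (3 * l)^2"
proof -
  have "l^2 \<le> l^4" "l^3 \<le> l^4" "1 \<le> l^4"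
    using \<open>1 < l\<close> by (auto intro: power_increasing one_le_power)
  then show ?thesis
    using assms(1) by (simp add: algebra_simps power2_eq_square power3_eq_cube power4_eq_xxxx)
qed

theorem lemma6:
  fixes p :: real and N t :: nat and X :: "nat \<Rightarrow> nat \<Rightarrow> bool" and S :: "nat set"
  assumes "0 < p" and "p < 1"
    and "good3 p N t X"
    and "S \<subseteq> {..<t}" and "card S = 3"
  defines "E \<equiv> hyp3 X N t (rvec X N S)"
    and "L2 \<equiv> 3 * L1 t"
  defines "adj \<equiv> (\<lambda>v1 v2. v1 \<noteq> v2 \<and> real (card {e \<in> E. v1 \<in> e \<and> v2 \<in> e}) \<ge> L2)"
  defines "E1 \<equiv> {e \<in> E. \<exists>v1 v2. v1 \<in> e \<and> v2 \<in> e \<and> adj v1 v2}"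
  defines "E2 \<equiv> E - E1"
  shows "\<exists>M::nat. \<exists>Es :: nat \<Rightarrow> nat set set.
           real M \<le> 96 * (L1 t)^2 * L2^2 \<and>
           (\<Union>i<M. Es i) = E2 \<and>
           (\<forall>i<M. \<forall>j<M. i \<noteq> j \<longrightarrow> Es i \<inter> Es j = {}) \<and>
           (\<forall>i<M. \<forall>j<M. \<forall>e1\<in>Es i. \<forall>e2\<in>Es j.
              e1 \<noteq> e2 \<and> e1 \<inter> e2 \<noteq> {} \<longrightarrow> i \<noteq> j) \<and>
           (\<forall>i<M. \<forall>j<M. \<forall>e1\<in>Es i. \<forall>e2\<in>Es j. \<forall>e\<in>E.
              e1 \<noteq> e2 \<and> e \<inter> e1 \<noteq> {} \<and> e \<inter> e2 \<noteq> {} \<longrightarrow> i \<noteq> j)"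
proof -
  have "finite E" unfolding E_def by (rule finite_hyp3)
  have card_E: "\<And>e. e \<in> E \<Longrightarrow> card e = 3" unfolding E_def hyp3_def by auto
  have no_config: "\<not> has_config E 1 (L1 t)" unfolding E_def using assms(3) by (rule good3_no_config_1)
  have "S \<in> E" unfolding E_def hyp3_def using assms(4,5) by auto
  with no_config have "1 < L1 t" by (rule one_less_if_no_config)
  have codegree: "real (card {e\<in>E. x \<in> e \<and> y \<in> e}) < L2"
    if "f \<in> E2" "x \<in> f" "y \<in> f" "x \<noteq> y" for f x y
  proof -
    have "\<not> adj x y" using that(1-3) unfolding E2_def E1_def by blast
    then show ?thesis using that(4) unfolding adj_def by simp
  qed
  have "E2 \<subseteq> E" "0 \<le> L2" using \<open>1 < L1 t\<close> unfolding E2_def L2_def by auto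
  obtain M Es where M: "real M \<le> 1 + 12 * L1 t * L2 * (1 + 2 * L1 t + 4 * (L1 t)^2)"
    and cover: "(\<Union>i<M. Es i) = E2"
    and disjoint: "\<And>i j. i < M \<Longrightarrow> j < M \<Longrightarrow> i \<noteq> j \<Longrightarrow> Es i \<inter> Es j = {}"
    and separated: "\<And>i j f g e. i < M \<Longrightarrow> j < M \<Longrightarrow> f \<in> Es i \<Longrightarrow> g \<in> Es j \<Longrightarrow> e \<in> E \<Longrightarrow>
       f \<noteq> g \<Longrightarrow> e \<inter> f \<noteq> {} \<Longrightarrow> e \<inter> g \<noteq> {} \<Longrightarrow> i \<noteq> j"
    using partition_low_codegree_edges[of E "L1 t" E2 L2] \<open>finite E\<close> card_E
      card_sunflower_less_if_no_config[OF \<open>finite E\<close> no_config] \<open>E2 \<subseteq> E\<close> \<open>0 \<le> L2\<close> codegree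
    by blast
  have "real M \<le> 96 * (L1 t)^2 * L2^2"
    using M \<open>1 < L1 t\<close> unfolding L2_def by (rule partition_size_bound)
  moreover have "i \<noteq> j" if "i < M" "j < M" "f \<in> Es i" "g \<in> Es j" "f \<noteq> g" "f \<inter> g \<noteq> {}" for i j f g
    using separated[of i j f g f] that cover \<open>E2 \<subseteq> E\<close> by blast
  ultimately show ?thesis
    using cover disjoint separated by (intro exI[of _ M] exI[of _ Es] conjI allI impI ballI) auto
qed

end
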